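(* $$\sigma(4,3)=120\lambda(7)-96\lambda(2)\lambda(5),\qquad \sigma(3,4)=-80\lambda(7)+8\lambda(3)\lambda(4)+\frac{176}{3}\lambda(2)\lambda(5).$$
   Context: For integers $t\geq 1$, $n\geq 1$ let $S_n^{(t)}=\sum_{k=1}^{n}\frac{1}{(2k-1)^t}$, and for integers $s\geq 2$, $t\geq 1$ let $\sigma(s,t)=\sum_{n\geq 1}\frac{S_n^{(t)}}{n^s}$. For real $s>1$, $\lambda(s)=\sum_{n\geq 1}\frac{1}{(2n-1)^s}$. *)

theory Defs
  imports "HOL-Analysis.Analysis"
begin

definition oddS :: "nat \<Rightarrow> nat \<Rightarrow> real" where
  "oddS t n = (\<Sum>k=1..n. 1 / (2 * real k - 1) ^ t)"

definition sigma :: "nat \<Rightarrow> nat \<Rightarrow> real" where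
  "sigma s t = (\<Sum>n. oddS t (n + 1) / (real (n + 1)) ^ s)"

definition dlambda :: "real \<Rightarrow> real" where
  "dlambda s = (\<Sum>n. 1 / (2 * real n + 1) powr s)"

end

theory Submission
  imports Defs
begin

text \<open>
  Write od i = 2i + 1 and ev j = 2j + 2. Since od i + od j = 2(i + j + 1), grouping the double
  series by n = i + j shows sigma(c, a) = 2^c T(a, 0, c), where
  T(a, b, c) is the odd Tornheim sum of 1 / (od i^a od j^b (od i + od j)^c) over all i, j.
  The partial fraction 1/(xy) = (1/x + 1/y)/(x + y) gives
  T(a+1, b+1, c) = T(a, b+1, c+1) + T(a+1, b, c+1); with the symmetry in a, b and
  T(a, b, 0) = \<lambda>(a) \<lambda>(b) this expresses T(3, 0, 4) and T(4, 0, 3) through T(3, 3, 1)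
  and T(2, 2, 3).

  These two are evaluated row by row. For fixed N = od n, partial fractions in the inner variable
  turn the row into a combination of \<lambda>(2), powers of 1/N, a telescoping harmonic series and a
  finite sum over the odd numbers below N. Those finite sums are the diagonals of an auxiliary
  double series over pairs (odd, even) whose rows enter the same computation, so after summing
  over n the auxiliary series occurs on both sides and cancels, leaving \<lambda>(2) \<lambda>(5) and \<lambda>(7).
\<close>

text \<open>
  Each lemma below states one partial-fraction identity for x + y = z in three forms: the row
  computations apply it with (x, y, z) = (q, N, q + N), (e, N, e + N) and (q, N - q, N).
\<close>

lemma partial_fractions_cube_linear:
  fixes x y z :: "'a::field"
  assumes "x + y = z" "x \<noteq> 0" "y \<noteq> 0" "z \<noteq> 0"
  shows "1 / (x ^ 3 * z) = 1 / (y * x ^ 3) - 1 / (y ^ 2 * x ^ 2) + (1 / x - 1 / z) / y ^ 3"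
    and "1 / (z ^ 3 * x) = - 1 / (y * z ^ 3) - 1 / (y ^ 2 * z ^ 2) + (1 / x - 1 / z) / y ^ 3"
    and "1 / (x ^ 3 * y) = 1 / (z * x ^ 3) + 1 / (z ^ 2 * x ^ 2) + (1 / x + 1 / y) / z ^ 3"
  using assms by (simp_all add: field_simps) (simp_all only: assms(1) [symmetric], algebra+)

lemma partial_fractions_square_cube:
  fixes x y z :: "'a::field"
  assumes "x + y = z" "x \<noteq> 0" "y \<noteq> 0" "z \<noteq> 0"
  shows "1 / (x ^ 2 * z ^ 3) =
      1 / (y ^ 3 * x ^ 2) + 2 / (y ^ 3 * z ^ 2) + 1 / (y ^ 2 * z ^ 3) - 3 * (1 / x - 1 / z) / y ^ 4"
    and "1 / (z ^ 2 * x ^ 3) =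
      - 1 / (y ^ 3 * z ^ 2) - 2 / (y ^ 3 * x ^ 2) + 1 / (y ^ 2 * x ^ 3)
        + 3 * (1 / x - 1 / z) / y ^ 4"
    and "1 / (x ^ 2 * y ^ 3) =
      1 / (z ^ 3 * x ^ 2) + 2 / (z ^ 3 * y ^ 2) + 1 / (z ^ 2 * y ^ 3) + 3 * (1 / x + 1 / y) / z ^ 4"
  using assms by (simp_all add: field_simps) (simp_all only: assms(1) [symmetric], algebra+)

lemma tornheim_partial_fraction:
  fixes x y :: "'a::field"
  assumes "x \<noteq> 0" "y \<noteq> 0" "x + y \<noteq> 0"
  shows "1 / (x ^ Suc a * y ^ Suc b * (x + y) ^ c) =
    1 / (x ^ a * y ^ Suc b * (x + y) ^ Suc c) + 1 / (x ^ Suc a * y ^ b * (x + y) ^ Suc c)"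
proof -
  define s where "s = x + y"
  define d where "d = x ^ a * y ^ b * s ^ c"
  have "s \<noteq> 0" "d \<noteq> 0"
    using assms by (simp_all add: s_def d_def)
  then have "1 / (y * (s * d)) + 1 / (x * (s * d)) = (x + y) / (x * y * s * d)"
    using assms by (simp add: field_simps)
  also have "\<dots> = 1 / (x * y * d)"
    using \<open>s \<noteq> 0\<close> \<open>d \<noteq> 0\<close> assms by (simp add: s_def)
  finally show ?thesis
    by (simp add: s_def [symmetric] d_def ac_simps)
qed

lemma summable_inverse_power_ge:
  fixes f :: "nat \<Rightarrow> real"
  assumes "2 \<le> k" "\<And>i. real i + 1 \<le> f i"
  shows "summable (\<lambda>i. 1 / f i ^ k)"
proof (rule summable_comparison_test')
  have "summable (\<lambda>i. inverse (real (Suc i) ^ 2))"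
    using inverse_power_summable[of 2] by (subst summable_Suc_iff) simp
  then show "summable (\<lambda>i. 1 / (real i + 1) ^ 2)"
    by (simp add: divide_inverse add.commute)
next
  fix i
  have "(real i + 1) ^ 2 \<le> (real i + 1) ^ k"
    using assms(1) by (intro power_increasing) auto
  also have "\<dots> \<le> f i ^ k"
    using assms(2)[of i] by (intro power_mono) auto
  finally show "norm (1 / f i ^ k) \<le> 1 / (real i + 1) ^ 2"
    using assms(2)[of i] by (auto intro!: divide_left_mono simp: abs_of_pos)
qed

lemma one_over_tendsto_0_if_ge:
  fixes f :: "nat \<Rightarrow> real"
  assumes "\<And>i. real i + 1 \<le> f i"
  shows "(\<lambda>i. 1 / f i) \<longlonglongrightarrow> 0"
proof (rule tendsto_sandwich[OF _ _ tendsto_const LIMSEQ_inverse_real_of_nat])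
  have "0 < f i" for i
    using assms[of i] by linarith
  then show "eventually (\<lambda>i. 0 \<le> 1 / f i) sequentially"
    by (simp add: less_imp_le)
  show "eventually (\<lambda>i. 1 / f i \<le> inverse (real (Suc i))) sequentially"
    using assms by (simp add: divide_inverse le_imp_inverse_le add.commute)
qed

lemma sums_minus_shifted:
  fixes f :: "nat \<Rightarrow> 'a::real_normed_vector"
  assumes "f sums s"
  shows "(\<lambda>j. f j - f (j + m)) sums (\<Sum>j<m. f j)"
  using sums_diff[OF assms sums_split_initial_segment[OF assms, of m]] by (simp add: diff_diff_eq2)

lemma sums_plus_shifted:
  fixes f :: "nat \<Rightarrow> 'a::real_normed_field"
  assumes "f sums s"
  shows "(\<lambda>j. f j + f (j + m)) sums (2 * s - (\<Sum>j<m. f j))"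
proof -
  have "s + (s - (\<Sum>j<m. f j)) = 2 * s - (\<Sum>j<m. f j)"
    by (simp add: algebra_simps)
  then show ?thesis
    using sums_add[OF assms sums_split_initial_segment[OF assms, of m]] by simp
qed

lemma has_sum_product_sums:
  fixes f g :: "nat \<Rightarrow> real"
  assumes "f sums F" "g sums G" "\<And>i. 0 \<le> f i" "\<And>j. 0 \<le> g j"
  shows "((\<lambda>(i, j). f i * g j) has_sum F * G) UNIV"
proof -
  have f: "(f has_sum F) UNIV" and g: "(g has_sum G) UNIV"
    using assms by (auto intro: sums_nonneg_imp_has_sum)
  have rows: "((\<lambda>j. f i * g j) has_sum f i * G) UNIV" for i
    by (rule has_sum_cmult_right[OF g])
  have "((\<lambda>i. f i * G) has_sum F * G) UNIV"
    by (rule has_sum_cmult_left[OF f])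
  moreover from this have "(\<lambda>(i, j). f i * g j) summable_on UNIV \<times> UNIV"
    by (intro summable_on_SigmaI[where g = "\<lambda>i. f i * G"])
       (use rows assms in \<open>auto intro: has_sum_imp_summable\<close>)
  ultimately have "((\<lambda>(i, j). f i * g j) has_sum F * G) (UNIV \<times> UNIV)"
    by (intro has_sum_SigmaI[where g = "\<lambda>i. f i * G"]) (use rows in auto)
  then show ?thesis
    by simp
qed

lemma summable_on_tornheim_family:
  fixes p q :: "nat \<Rightarrow> real"
  assumes p: "\<And>i. real i + 1 \<le> p i" and q: "\<And>j. real j + 1 \<le> q j"
    and "2 \<le> a + c" "2 \<le> b + c" "4 \<le> a + b + c"
  shows "(\<lambda>(i, j). 1 / (p i ^ a * q j ^ b * (p i + q j) ^ c)) summable_on UNIV"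
proof -
  \<comment> \<open>split c so that both exponents reach 2; c1 truncates to 0 when a \<ge> 2\<close>
  define c1 where "c1 = 2 - a"
  define c2 where "c2 = c - c1"
  have c: "c = c1 + c2" "2 \<le> a + c1" "2 \<le> b + c2"
    using assms(3-5) by (simp_all add: c1_def c2_def)
  have p_pos: "0 < p i" and q_pos: "0 < q j" for i j
    using p[of i] q[of j] by linarith+
  have "((\<lambda>(i, j). 1 / p i ^ (a + c1) * (1 / q j ^ (b + c2))) has_sum
      suminf (\<lambda>i. 1 / p i ^ (a + c1)) * suminf (\<lambda>j. 1 / q j ^ (b + c2))) UNIV"
    using c p_pos q_pos by (intro has_sum_product_sums summable_sums summable_inverse_power_ge p q)
      (simp_all add: less_imp_le)
  then show ?thesis
  proof (rule summable_on_comparison_test[OF has_sum_imp_summable], clarsimp)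
    fix i j
    have "p i ^ c1 * q j ^ c2 \<le> (p i + q j) ^ c1 * (p i + q j) ^ c2"
      using p_pos[of i] q_pos[of j] by (intro mult_mono power_mono) auto
    then have "p i ^ (a + c1) * q j ^ (b + c2) \<le> p i ^ a * q j ^ b * (p i + q j) ^ c"
      using p_pos[of i] q_pos[of j] by (simp add: c(1) power_add mult_left_mono mult_ac)
    then show "1 / (p i ^ a * q j ^ b * (p i + q j) ^ c) \<le> 1 / (p i ^ (a + c1) * q j ^ (b + c2))"
      using p_pos[of i] q_pos[of j] by (intro divide_left_mono) auto
  qed (use p_pos q_pos in \<open>auto simp: add_pos_pos less_imp_le\<close>)
qed

lemma has_sum_by_rows:
  fixes f :: "nat \<times> nat \<Rightarrow> real"
  assumes "(f has_sum S) UNIV" "\<And>n. (\<lambda>j. f (n, j)) sums r n"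
  shows "(r has_sum S) UNIV"
proof (rule has_sum_Sigma'[where B = "\<lambda>_. UNIV"])
  show "(f has_sum S) (UNIV \<times> UNIV)"
    using assms(1) by simp
  fix n
  have "(\<lambda>j. f (n, j)) summable_on UNIV"
    using summable_on_SigmaD1[of "\<lambda>n j. f (n, j)" UNIV "\<lambda>_. UNIV"] assms(1)
    by (auto dest: has_sum_imp_summable)
  then show "((\<lambda>j. f (n, j)) has_sum r n) UNIV"
    using assms(2) has_sum_imp_sums sums_unique2 has_sum_infsum by metis
qed

lemma has_sum_diagonals_atMost:
  fixes g :: "nat \<Rightarrow> nat \<Rightarrow> real"
  assumes "((\<lambda>(i, j). g i (i + j)) has_sum S) UNIV"
  shows "((\<lambda>n. \<Sum>i\<le>n. g i n) has_sum S) UNIV"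
proof -
  have "((\<lambda>(n, i). g i n) has_sum S) (SIGMA n:UNIV. {..n})"
    using assms
    by (subst has_sum_reindex_bij_witness[where i = "\<lambda>(i, j). (i + j, i)"
          and j = "\<lambda>(n, i). (i, n - i)" and T = UNIV and h = "\<lambda>(i, j). g i (i + j)"]) auto
  then show ?thesis
    by (rule has_sum_Sigma') (auto intro: has_sum_finiteI)
qed

lemma has_sum_diagonals_lessThan:
  fixes g :: "nat \<Rightarrow> nat \<Rightarrow> real"
  assumes "((\<lambda>(k, j). g k (k + j + 1)) has_sum S) UNIV"
  shows "((\<lambda>n. \<Sum>k<n. g k n) has_sum S) UNIV"
proof -
  have "((\<lambda>(n, k). g k n) has_sum S) (SIGMA n:UNIV. {..<n})"
    using assms
    by (subst has_sum_reindex_bij_witness[where i = "\<lambda>(k, j). (k + j + 1, k)"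
          and j = "\<lambda>(n, k). (k, n - k - 1)" and T = UNIV and h = "\<lambda>(k, j). g k (k + j + 1)"]) auto
  then show ?thesis
    by (rule has_sum_Sigma') (auto intro: has_sum_finiteI)
qed

definition od :: "nat \<Rightarrow> real" where "od i = 2 * real i + 1"

definition ev :: "nat \<Rightarrow> real" where "ev j = 2 * real j + 2"

lemma od_gt_0 [simp]: "0 < od i"
  by (simp add: od_def)

lemma ev_gt_0 [simp]: "0 < ev j"
  by (simp add: ev_def)

lemma od_neq_0 [simp]: "od i \<noteq> 0" and ev_neq_0 [simp]: "ev j \<noteq> 0"
  and od_ge_0 [simp]: "0 \<le> od i" and ev_ge_0 [simp]: "0 \<le> ev j"
  using od_gt_0[of i] ev_gt_0[of j] by linarith+

lemma od_ge: "real i + 1 \<le> od i" and ev_ge: "real j + 1 \<le> ev j"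
  by (simp_all add: od_def ev_def)

lemma sum_od_diff_od: "(\<Sum>k<n. f (od n - od k)) = (\<Sum>j<n. f (ev j))"
proof -
  have "(\<Sum>k<n. f (od n - od k)) = (\<Sum>k<n. f (ev (n - Suc k)))"
    by (rule sum.cong) (simp_all add: od_def ev_def of_nat_diff)
  also have "\<dots> = (\<Sum>j<n. f (ev j))"
    by (rule sum.nat_diff_reindex)
  finally show ?thesis .
qed

lemma oddS_Suc: "oddS t (Suc n) = (\<Sum>i\<le>n. 1 / od i ^ t)"
  unfolding oddS_def One_nat_def sum.shift_bounds_cl_Suc_ivl atLeast0AtMost
  by (simp add: od_def add.commute)

definition odd_zeta :: "nat \<Rightarrow> real" where
  "odd_zeta k = (\<Sum>i. 1 / od i ^ k)"

definition even_zeta :: "nat \<Rightarrow> real" where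
  "even_zeta k = (\<Sum>j. 1 / ev j ^ k)"

lemma odd_zeta_sums: "2 \<le> k \<Longrightarrow> (\<lambda>i. 1 / od i ^ k) sums odd_zeta k"
  unfolding odd_zeta_def by (intro summable_sums summable_inverse_power_ge od_ge)

lemma even_zeta_sums: "2 \<le> k \<Longrightarrow> (\<lambda>j. 1 / ev j ^ k) sums even_zeta k"
  unfolding even_zeta_def by (intro summable_sums summable_inverse_power_ge ev_ge)

lemma odd_zeta_has_sum: "2 \<le> k \<Longrightarrow> ((\<lambda>i. 1 / od i ^ k) has_sum odd_zeta k) UNIV"
  by (rule sums_nonneg_imp_has_sum[OF odd_zeta_sums]) auto

lemma dlambda_numeral: "dlambda (numeral k) = odd_zeta (numeral k)"
  by (simp add: dlambda_def odd_zeta_def od_def powr_numeral add_pos_nonneg)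

lemma even_zeta_eq:
  assumes "2 \<le> k"
  shows "even_zeta k = odd_zeta k / (2 ^ k - 1)"
proof -
  define h where "h m = 1 / (real m + 1) ^ k" for m
  have h: "h sums suminf h"
    unfolding h_def by (intro summable_sums summable_inverse_power_ge assms) simp
  have "(\<lambda>j. sum h {j * 2..<j * 2 + 2}) sums suminf h"
    using h by (rule sums_group) simp
  moreover have "sum h {j * 2..<j * 2 + 2} = 1 / od j ^ k + 1 / ev j ^ k" for j
    by (simp add: h_def od_def ev_def numeral_2_eq_2 add_ac)
  ultimately have "(\<lambda>j. 1 / od j ^ k + 1 / ev j ^ k) sums suminf h"
    by simp
  then have sum_odd_even: "odd_zeta k + even_zeta k = suminf h"
    using sums_add[OF odd_zeta_sums even_zeta_sums] assms sums_unique2 by blast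
  have "ev j ^ k = 2 ^ k * (real j + 1) ^ k" for j
    unfolding ev_def power_mult_distrib[symmetric] by (simp add: algebra_simps)
  then have "1 / ev j ^ k = h j / 2 ^ k" for j
    by (simp add: h_def)
  then have "(\<lambda>j. 1 / ev j ^ k) sums (suminf h / 2 ^ k)"
    using sums_divide[OF h] by simp
  then have even: "even_zeta k = suminf h / 2 ^ k"
    using even_zeta_sums[OF assms] sums_unique2 by blast
  have "odd_zeta k = even_zeta k * (2 ^ k - 1)"
    using sum_odd_even even by (simp add: diff_divide_distrib algebra_simps)
  moreover have "(2::real) ^ k - 1 \<noteq> 0"
    using power_increasing[OF assms, of "2::real"] by simp
  ultimately show ?thesis
    by simp
qed

lemma odd_even_harmonic_sums:
  "(\<lambda>j. (1 / od j - 1 / ev (j + n)) + (1 / ev j - 1 / od (j + Suc n))) sums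
     ((\<Sum>k<Suc n. 1 / od k) + (\<Sum>k<n. 1 / ev k))"
proof (induction n)
  case 0
  have "(\<lambda>j. 1 / od j - 1 / od (Suc j)) sums (1 / od 0)"
    using telescope_sums'[OF one_over_tendsto_0_if_ge[OF od_ge]] by simp
  then show ?case
    by simp
next
  case (Suc n)
  define f where "f j = 1 / ev (j + n) + 1 / od (j + Suc n)" for j
  have "f \<longlonglongrightarrow> 0"
    unfolding f_def
    by (intro tendsto_add[where b = 0 and a = 0, simplified] one_over_tendsto_0_if_ge
        order_trans[OF _ ev_ge] order_trans[OF _ od_ge]) simp_all
  have "(\<lambda>j. (1 / od j - 1 / ev (j + n)) + (1 / ev j - 1 / od (j + Suc n)) + (f j - f (Suc j))) =
      (\<lambda>j. (1 / od j - 1 / ev (j + Suc n)) + (1 / ev j - 1 / od (j + Suc (Suc n))))"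
    by (simp add: f_def fun_eq_iff)
  moreover have "(\<Sum>k<Suc n. 1 / od k) + (\<Sum>k<n. 1 / ev k) + (f 0 - 0) =
      (\<Sum>k<Suc (Suc n). 1 / od k) + (\<Sum>k<Suc n. 1 / ev k)"
    by (simp add: f_def)
  ultimately show ?case
    using sums_add[OF Suc.IH telescope_sums'[OF \<open>f \<longlonglongrightarrow> 0\<close>]] by (simp only:)
qed

definition odd_tornheim_term :: "nat \<Rightarrow> nat \<Rightarrow> nat \<Rightarrow> nat \<times> nat \<Rightarrow> real" where
  "odd_tornheim_term a b c = (\<lambda>(i, j). 1 / (od i ^ a * od j ^ b * (od i + od j) ^ c))"

definition odd_tornheim :: "nat \<Rightarrow> nat \<Rightarrow> nat \<Rightarrow> real" where
  "odd_tornheim a b c = infsum (odd_tornheim_term a b c) UNIV"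

lemma odd_tornheim_summable:
  "2 \<le> a + c \<Longrightarrow> 2 \<le> b + c \<Longrightarrow> 4 \<le> a + b + c \<Longrightarrow> odd_tornheim_term a b c summable_on UNIV"
  unfolding odd_tornheim_term_def by (rule summable_on_tornheim_family[OF od_ge od_ge])

lemma odd_tornheim_recurrence:
  assumes "2 \<le> a + b + c" "1 \<le> a + c" "1 \<le> b + c"
  shows "odd_tornheim (a + 1) (b + 1) c =
    odd_tornheim a (b + 1) (c + 1) + odd_tornheim (a + 1) b (c + 1)"
proof -
  have "odd_tornheim_term (Suc a) (Suc b) c x =
      odd_tornheim_term a (Suc b) (Suc c) x + odd_tornheim_term (Suc a) b (Suc c) x" for x
  proof (cases x)
    case (Pair i j)
    have "od i + od j \<noteq> 0"
      using od_gt_0[of i] od_gt_0[of j] by linarith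
    then show ?thesis
      by (simp add: Pair odd_tornheim_term_def tornheim_partial_fraction del: power_Suc)
  qed
  then have "odd_tornheim_term (Suc a) (Suc b) c =
      (\<lambda>x. odd_tornheim_term a (Suc b) (Suc c) x + odd_tornheim_term (Suc a) b (Suc c) x)"
    by (rule ext)
  moreover have "odd_tornheim_term a (Suc b) (Suc c) summable_on UNIV"
    "odd_tornheim_term (Suc a) b (Suc c) summable_on UNIV"
    using assms by (simp_all add: odd_tornheim_summable)
  ultimately show ?thesis
    unfolding odd_tornheim_def by (simp add: infsum_add)
qed

lemma odd_tornheim_commute: "odd_tornheim a b c = odd_tornheim b a c"
proof -
  have "odd_tornheim_term a b c \<circ> prod.swap = odd_tornheim_term b a c"
    by (auto simp: odd_tornheim_term_def fun_eq_iff add.commute mult.commute mult.left_commute)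
  moreover have "infsum (odd_tornheim_term a b c \<circ> prod.swap) UNIV =
      infsum (odd_tornheim_term a b c) UNIV"
    by (rule infsum_reindex_bij_betw[unfolded comp_def[symmetric]]) (auto simp: bij_betw_def)
  ultimately show ?thesis
    by (simp add: odd_tornheim_def)
qed

lemma odd_tornheim_0:
  assumes "2 \<le> a" "2 \<le> b"
  shows "odd_tornheim a b 0 = odd_zeta a * odd_zeta b"
proof -
  have "odd_tornheim_term a b 0 = (\<lambda>(i, j). 1 / od i ^ a * (1 / od j ^ b))"
    by (auto simp: odd_tornheim_term_def fun_eq_iff)
  moreover have "((\<lambda>(i, j). 1 / od i ^ a * (1 / od j ^ b)) has_sum odd_zeta a * odd_zeta b) UNIV"
    using assms by (intro has_sum_product_sums odd_zeta_sums) auto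
  ultimately show ?thesis
    by (simp add: odd_tornheim_def infsumI)
qed

lemma sigma_eq_odd_tornheim:
  assumes "2 \<le> c" "4 \<le> a + c"
  shows "sigma c a = 2 ^ c * odd_tornheim a 0 c"
proof -
  define g where "g i n = 1 / (od i ^ a * (real n + 1) ^ c)" for i n
  have "g i (i + j) = 2 ^ c * odd_tornheim_term a 0 c (i, j)" for i j
  proof -
    have "od i + od j = 2 * (real (i + j) + 1)"
      by (simp add: od_def)
    then have "(od i + od j) ^ c = 2 ^ c * (real (i + j) + 1) ^ c"
      by (simp only: power_mult_distrib)
    then show ?thesis
      by (simp add: g_def odd_tornheim_term_def)
  qed
  then have "(\<lambda>(i, j). g i (i + j)) = (\<lambda>x. 2 ^ c * odd_tornheim_term a 0 c x)"
    by auto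
  moreover have "(odd_tornheim_term a 0 c has_sum odd_tornheim a 0 c) UNIV"
    unfolding odd_tornheim_def using assms by (intro has_sum_infsum odd_tornheim_summable) auto
  ultimately have "((\<lambda>n. \<Sum>i\<le>n. g i n) has_sum 2 ^ c * odd_tornheim a 0 c) UNIV"
    by (intro has_sum_diagonals_atMost) (simp add: has_sum_cmult_right)
  moreover have "(\<Sum>i\<le>n. g i n) = oddS a (n + 1) / real (n + 1) ^ c" for n
    by (simp add: g_def oddS_Suc sum_divide_distrib add.commute)
  ultimately have "(\<lambda>n. oddS a (n + 1) / real (n + 1) ^ c) sums (2 ^ c * odd_tornheim a 0 c)"
    by (simp add: has_sum_imp_sums)
  then show ?thesis
    unfolding sigma_def by (rule sums_unique [symmetric])
qed

lemma has_sum_odd_even_diagonals: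
  fixes \<phi> :: "real \<Rightarrow> real \<Rightarrow> real"
  assumes "((\<lambda>(n, j). \<phi> (od n) (ev j)) has_sum U) UNIV"
  shows "((\<lambda>n. \<Sum>k<n. \<phi> (od k) (od n - od k)) has_sum U) UNIV"
proof (rule has_sum_diagonals_lessThan)
  have "od (k + j + 1) - od k = ev j" for k j
    by (simp add: od_def ev_def)
  then show "((\<lambda>(k, j). \<phi> (od k) (od (k + j + 1) - od k)) has_sum U) UNIV"
    using assms by simp
qed

text \<open>
  Since od k + ev j = od (k + j + 1), the finite sums over k < n below are the diagonals of the
  double series of \<phi> (od n) (ev j), whose rows are added with the same factor \<epsilon>: both
  contributions to the sum over n equal \<epsilon> times that double series and cancel.
\<close>

lemma infsum_by_odd_even_cancellation:
  fixes f :: "nat \<times> nat \<Rightarrow> real" and \<phi> :: "real \<Rightarrow> real \<Rightarrow> real"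
  assumes f: "f summable_on UNIV"
    and \<phi>: "(\<lambda>(n, j). \<phi> (od n) (ev j)) summable_on UNIV"
    and rows: "\<And>n. (\<lambda>j. f (n, j) + \<epsilon> * \<phi> (od n) (ev j)) sums
                   (\<epsilon> * (\<Sum>k<n. \<phi> (od k) (od n - od k)) + g n)"
    and g: "(g has_sum G) UNIV"
  shows "infsum f UNIV = G"
proof -
  define U where "U = infsum (\<lambda>(n, j). \<phi> (od n) (ev j)) UNIV"
  have U: "((\<lambda>(n, j). \<phi> (od n) (ev j)) has_sum U) UNIV"
    unfolding U_def using \<phi> by (rule has_sum_infsum)
  have "((\<lambda>x. f x + \<epsilon> * (case x of (n, j) \<Rightarrow> \<phi> (od n) (ev j))) has_sum infsum f UNIV + \<epsilon> * U) UNIV"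
    by (intro has_sum_add has_sum_cmult_right has_sum_infsum f U)
  then have "((\<lambda>n. \<epsilon> * (\<Sum>k<n. \<phi> (od k) (od n - od k)) + g n) has_sum infsum f UNIV + \<epsilon> * U) UNIV"
    by (rule has_sum_by_rows) (simp add: rows)
  moreover have "((\<lambda>n. \<epsilon> * (\<Sum>k<n. \<phi> (od k) (od n - od k)) + g n) has_sum \<epsilon> * U + G) UNIV"
    by (intro has_sum_add has_sum_cmult_right has_sum_odd_even_diagonals U g)
  ultimately show ?thesis
    using has_sum_unique by fastforce
qed

lemma row_sums_cube_linear:
  "(\<lambda>j. 1 / (od j ^ 3 * (od n + od j)) + 1 / ((od n + ev j) ^ 3 * ev j)) sums
     ((\<Sum>k<n. 1 / (od k ^ 3 * (od n - od k))) - 2 * odd_zeta 2 / od n ^ 2 + 3 / od n ^ 4)"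
proof -
  define N where "N = od n"
  define A where "A k = (\<Sum>i<n. 1 / od i ^ k)" for k
  define E where "E k = (\<Sum>j<n. 1 / ev j ^ k)" for k
  have N: "N \<noteq> 0"
    by (simp add: N_def)
  have "1 / (od k ^ 3 * (N - od k)) =
      1 / (N * od k ^ 3) + 1 / (N ^ 2 * od k ^ 2) + (1 / od k + 1 / (N - od k)) / N ^ 3"
    if "k < n" for k
    using that N by (intro partial_fractions_cube_linear(3)) (simp_all add: N_def od_def)
  then have "(\<Sum>k<n. 1 / (od k ^ 3 * (N - od k))) =
      (\<Sum>k<n. 1 / od k ^ 3) / N + (\<Sum>k<n. 1 / od k ^ 2) / N ^ 2
      + ((\<Sum>k<n. 1 / od k) + (\<Sum>k<n. 1 / (N - od k))) / N ^ 3"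
    by (simp add: sum.distrib sum_divide_distrib add_divide_distrib ac_simps)
  also have "(\<Sum>k<n. 1 / (N - od k)) = E 1"
    unfolding N_def E_def using sum_od_diff_od[of "\<lambda>d. 1 / d"] by simp
  finally have finite:
    "(\<Sum>k<n. 1 / (od k ^ 3 * (N - od k))) = A 3 / N + A 2 / N ^ 2 + (A 1 + E 1) / N ^ 3"
    by (simp add: A_def)
  have "1 / (od j ^ 3 * (N + od j)) + 1 / ((N + ev j) ^ 3 * ev j) =
      (1 / od j ^ 3 - 1 / od (j + Suc n) ^ 3) / N - (1 / od j ^ 2 + 1 / od (j + Suc n) ^ 2) / N ^ 2
      + ((1 / od j - 1 / ev (j + n)) + (1 / ev j - 1 / od (j + Suc n))) / N ^ 3" for j
  proof -
    have sums: "od j + N = ev (j + n)" "ev j + N = od (j + Suc n)"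
      by (simp_all add: N_def od_def ev_def)
    show ?thesis
      unfolding add.commute[of N] sums
        partial_fractions_cube_linear(1)[OF sums(1) od_neq_0 N ev_neq_0]
        partial_fractions_cube_linear(2)[OF sums(2) ev_neq_0 N od_neq_0]
      by (simp add: diff_divide_distrib add_divide_distrib ac_simps)
  qed
  moreover have "(\<lambda>j. (1 / od j ^ 3 - 1 / od (j + Suc n) ^ 3) / N
      - (1 / od j ^ 2 + 1 / od (j + Suc n) ^ 2) / N ^ 2
      + ((1 / od j - 1 / ev (j + n)) + (1 / ev j - 1 / od (j + Suc n))) / N ^ 3) sums
    ((\<Sum>k<Suc n. 1 / od k ^ 3) / N - (2 * odd_zeta 2 - (\<Sum>k<Suc n. 1 / od k ^ 2)) / N ^ 2
      + ((\<Sum>k<Suc n. 1 / od k) + (\<Sum>k<n. 1 / ev k)) / N ^ 3)"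
  proof -
    have "(\<lambda>j. 1 / od j ^ 3 - 1 / od (j + Suc n) ^ 3) sums (\<Sum>k<Suc n. 1 / od k ^ 3)"
      by (rule sums_minus_shifted[OF odd_zeta_sums]) simp
    moreover have "(\<lambda>j. 1 / od j ^ 2 + 1 / od (j + Suc n) ^ 2) sums
        (2 * odd_zeta 2 - (\<Sum>k<Suc n. 1 / od k ^ 2))"
      by (rule sums_plus_shifted[OF odd_zeta_sums]) simp
    ultimately show ?thesis
      by (intro sums_add sums_diff sums_divide odd_even_harmonic_sums)
  qed
  moreover have "(\<Sum>k<Suc n. 1 / od k ^ 3) / N - (2 * odd_zeta 2 - (\<Sum>k<Suc n. 1 / od k ^ 2)) / N ^ 2
      + ((\<Sum>k<Suc n. 1 / od k) + (\<Sum>k<n. 1 / ev k)) / N ^ 3 =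
    (\<Sum>k<n. 1 / (od k ^ 3 * (N - od k))) - 2 * odd_zeta 2 / N ^ 2 + 3 / N ^ 4"
    unfolding finite A_def E_def sum.lessThan_Suc N_def [symmetric]
    using N by (simp add: field_simps) algebra
  ultimately show ?thesis
    by (simp add: N_def)
qed

lemma row_sums_square_cube:
  "(\<lambda>j. 1 / (od j ^ 2 * (od n + od j) ^ 3) - 1 / ((od n + ev j) ^ 2 * ev j ^ 3)) sums
     (10 / 3 * odd_zeta 2 / od n ^ 3 - 4 / od n ^ 5 - (\<Sum>k<n. 1 / (od k ^ 2 * (od n - od k) ^ 3)))"
proof -
  define N where "N = od n"
  define A where "A k = (\<Sum>i<n. 1 / od i ^ k)" for k
  define E where "E k = (\<Sum>j<n. 1 / ev j ^ k)" for k
  have N: "N \<noteq> 0"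
    by (simp add: N_def)
  have "1 / (od k ^ 2 * (N - od k) ^ 3) =
      1 / (N ^ 3 * od k ^ 2) + 2 / (N ^ 3 * (N - od k) ^ 2) + 1 / (N ^ 2 * (N - od k) ^ 3)
      + 3 * (1 / od k + 1 / (N - od k)) / N ^ 4" if "k < n" for k
    using that N by (intro partial_fractions_square_cube(3)) (simp_all add: N_def od_def)
  then have sum_eq: "(\<Sum>k<n. 1 / (od k ^ 2 * (N - od k) ^ 3)) =
      (\<Sum>k<n. 1 / od k ^ 2) / N ^ 3 + 2 * (\<Sum>k<n. 1 / (N - od k) ^ 2) / N ^ 3
      + (\<Sum>k<n. 1 / (N - od k) ^ 3) / N ^ 2
      + 3 * ((\<Sum>k<n. 1 / od k) + (\<Sum>k<n. 1 / (N - od k))) / N ^ 4"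
    by (simp add: sum.distrib sum_divide_distrib sum_distrib_left add_divide_distrib ac_simps)
  moreover have E_eq: "(\<Sum>k<n. 1 / (N - od k) ^ i) = E i" for i
    unfolding N_def E_def using sum_od_diff_od[of "\<lambda>d. 1 / d ^ i"] by simp
  ultimately have finite: "(\<Sum>k<n. 1 / (od k ^ 2 * (N - od k) ^ 3)) =
      A 2 / N ^ 3 + 2 * E 2 / N ^ 3 + E 3 / N ^ 2 + 3 * (A 1 + E 1) / N ^ 4"
    using E_eq[of 1] by (simp add: A_def)
  have "1 / (od j ^ 2 * (N + od j) ^ 3) - 1 / ((N + ev j) ^ 2 * ev j ^ 3) =
      (1 / od j ^ 2 + 1 / od (j + Suc n) ^ 2) / N ^ 3
      + 2 * (1 / ev j ^ 2 + 1 / ev (j + n) ^ 2) / N ^ 3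
      - (1 / ev j ^ 3 - 1 / ev (j + n) ^ 3) / N ^ 2
      - 3 * ((1 / od j - 1 / ev (j + n)) + (1 / ev j - 1 / od (j + Suc n))) / N ^ 4" for j
  proof -
    have sums: "od j + N = ev (j + n)" "ev j + N = od (j + Suc n)"
      by (simp_all add: N_def od_def ev_def)
    show ?thesis
      unfolding add.commute[of N] sums
        partial_fractions_square_cube(1)[OF sums(1) od_neq_0 N ev_neq_0]
        partial_fractions_square_cube(2)[OF sums(2) ev_neq_0 N od_neq_0]
      by (simp add: diff_divide_distrib add_divide_distrib right_diff_distrib distrib_left ac_simps)
  qed
  moreover have "(\<lambda>j. (1 / od j ^ 2 + 1 / od (j + Suc n) ^ 2) / N ^ 3
      + 2 * (1 / ev j ^ 2 + 1 / ev (j + n) ^ 2) / N ^ 3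
      - (1 / ev j ^ 3 - 1 / ev (j + n) ^ 3) / N ^ 2
      - 3 * ((1 / od j - 1 / ev (j + n)) + (1 / ev j - 1 / od (j + Suc n))) / N ^ 4) sums
    ((2 * odd_zeta 2 - (\<Sum>k<Suc n. 1 / od k ^ 2)) / N ^ 3
      + 2 * (2 * even_zeta 2 - E 2) / N ^ 3 - E 3 / N ^ 2
      - 3 * ((\<Sum>k<Suc n. 1 / od k) + (\<Sum>k<n. 1 / ev k)) / N ^ 4)"
  proof -
    have "(\<lambda>j. 1 / od j ^ 2 + 1 / od (j + Suc n) ^ 2) sums
        (2 * odd_zeta 2 - (\<Sum>k<Suc n. 1 / od k ^ 2))"
      by (rule sums_plus_shifted[OF odd_zeta_sums]) simp
    moreover have "(\<lambda>j. 1 / ev j ^ 2 + 1 / ev (j + n) ^ 2) sums (2 * even_zeta 2 - E 2)"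
      unfolding E_def by (rule sums_plus_shifted[OF even_zeta_sums]) simp
    moreover have "(\<lambda>j. 1 / ev j ^ 3 - 1 / ev (j + n) ^ 3) sums E 3"
      unfolding E_def by (rule sums_minus_shifted[OF even_zeta_sums]) simp
    ultimately show ?thesis
      by (intro sums_add sums_diff sums_divide sums_mult odd_even_harmonic_sums)
  qed
  moreover have "(2 * odd_zeta 2 - (\<Sum>k<Suc n. 1 / od k ^ 2)) / N ^ 3
      + 2 * (2 * even_zeta 2 - E 2) / N ^ 3 - E 3 / N ^ 2
      - 3 * ((\<Sum>k<Suc n. 1 / od k) + (\<Sum>k<n. 1 / ev k)) / N ^ 4 =
    10 / 3 * odd_zeta 2 / N ^ 3 - 4 / N ^ 5 - (\<Sum>k<n. 1 / (od k ^ 2 * (N - od k) ^ 3))"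
    unfolding finite A_def E_def sum.lessThan_Suc N_def [symmetric] even_zeta_eq[OF order_refl]
    using N by (simp add: field_simps) algebra
  ultimately show ?thesis
    by (simp add: N_def)
qed

lemma odd_tornheim_3_3_1: "odd_tornheim 3 3 1 = 3 * odd_zeta 7 - 2 * odd_zeta 2 * odd_zeta 5"
proof -
  define \<phi> where "\<phi> x e = 1 / (x ^ 3 * (x + e) ^ 3 * e)" for x e :: real
  have "infsum (odd_tornheim_term 3 3 1) UNIV = - 2 * odd_zeta 2 * odd_zeta 5 + 3 * odd_zeta 7"
  proof (rule infsum_by_odd_even_cancellation[where \<phi> = \<phi> and \<epsilon> = 1])
    show "odd_tornheim_term 3 3 1 summable_on UNIV"
      by (rule odd_tornheim_summable) auto
    have "(\<lambda>(n, j). 1 / (od n ^ 3 * ev j ^ 1 * (od n + ev j) ^ 3)) summable_on UNIV"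
      by (rule summable_on_tornheim_family[OF od_ge ev_ge]) auto
    then show "(\<lambda>(n, j). \<phi> (od n) (ev j)) summable_on UNIV"
      by (simp add: \<phi>_def mult_ac)
    fix n
    show "(\<lambda>j. odd_tornheim_term 3 3 1 (n, j) + 1 * \<phi> (od n) (ev j)) sums
      (1 * (\<Sum>k<n. \<phi> (od k) (od n - od k))
        + (- 2 * odd_zeta 2 * (1 / od n ^ 5) + 3 * (1 / od n ^ 7)))"
      using sums_divide[OF row_sums_cube_linear[of n], of "od n ^ 3"]
      by (simp add: odd_tornheim_term_def \<phi>_def add_divide_distrib diff_divide_distrib
          sum_divide_distrib power_add [symmetric] mult_ac add_diff_eq diff_add_eq)
  next
    show "((\<lambda>n. - 2 * odd_zeta 2 * (1 / od n ^ 5) + 3 * (1 / od n ^ 7)) has_sum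
        - 2 * odd_zeta 2 * odd_zeta 5 + 3 * odd_zeta 7) UNIV"
      by (intro has_sum_add has_sum_cmult_right odd_zeta_has_sum) auto
  qed
  then show ?thesis
    by (simp add: odd_tornheim_def)
qed

lemma odd_tornheim_2_2_3: "odd_tornheim 2 2 3 = 10 / 3 * odd_zeta 2 * odd_zeta 5 - 4 * odd_zeta 7"
proof -
  define \<phi> where "\<phi> x e = 1 / (x ^ 2 * (x + e) ^ 2 * e ^ 3)" for x e :: real
  have "infsum (odd_tornheim_term 2 2 3) UNIV =
      10 / 3 * odd_zeta 2 * odd_zeta 5 + (- 4) * odd_zeta 7"
  proof (rule infsum_by_odd_even_cancellation[where \<phi> = \<phi> and \<epsilon> = "- 1"])
    show "odd_tornheim_term 2 2 3 summable_on UNIV"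
      by (rule odd_tornheim_summable) auto
    have "(\<lambda>(n, j). 1 / (od n ^ 2 * ev j ^ 3 * (od n + ev j) ^ 2)) summable_on UNIV"
      by (rule summable_on_tornheim_family[OF od_ge ev_ge]) auto
    then show "(\<lambda>(n, j). \<phi> (od n) (ev j)) summable_on UNIV"
      by (simp add: \<phi>_def mult_ac)
    fix n
    show "(\<lambda>j. odd_tornheim_term 2 2 3 (n, j) + - 1 * \<phi> (od n) (ev j)) sums
      (- 1 * (\<Sum>k<n. \<phi> (od k) (od n - od k))
        + (10 / 3 * odd_zeta 2 * (1 / od n ^ 5) + (- 4) * (1 / od n ^ 7)))"
      using sums_divide[OF row_sums_square_cube[of n], of "od n ^ 2"]
      by (simp add: odd_tornheim_term_def \<phi>_def add_divide_distrib diff_divide_distrib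
          sum_divide_distrib power_add [symmetric] mult_ac)
  next
    show "((\<lambda>n. 10 / 3 * odd_zeta 2 * (1 / od n ^ 5) + (- 4) * (1 / od n ^ 7)) has_sum
        10 / 3 * odd_zeta 2 * odd_zeta 5 + (- 4) * odd_zeta 7) UNIV"
      by (intro has_sum_add has_sum_cmult_right odd_zeta_has_sum) auto
  qed
  then show ?thesis
    by (simp add: odd_tornheim_def)
qed

lemma odd_tornheim_weight_7_reduction:
  "odd_tornheim 3 0 4 = odd_tornheim 3 3 1 / 2 - 3 / 2 * odd_tornheim 2 2 3"
  "odd_tornheim 4 0 3 = odd_zeta 3 * odd_zeta 4 - 2 * odd_tornheim 3 3 1 + odd_tornheim 2 2 3"
proof -
  have "odd_tornheim 4 3 0 = odd_tornheim 3 3 1 + odd_tornheim 4 2 1"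
    using odd_tornheim_recurrence[of 3 2 0] by (simp add: numeral_eq_Suc)
  moreover have "odd_tornheim 4 2 1 = odd_tornheim 3 2 2 + odd_tornheim 4 1 2"
    using odd_tornheim_recurrence[of 3 1 1] by (simp add: numeral_eq_Suc)
  moreover have "odd_tornheim 4 1 2 = odd_tornheim 3 1 3 + odd_tornheim 4 0 3"
    using odd_tornheim_recurrence[of 3 0 2] by (simp add: numeral_eq_Suc)
  moreover have "odd_tornheim 3 3 1 = odd_tornheim 2 3 2 + odd_tornheim 3 2 2"
    using odd_tornheim_recurrence[of 2 2 1] by (simp add: numeral_eq_Suc)
  moreover have "odd_tornheim 3 2 2 = odd_tornheim 2 2 3 + odd_tornheim 3 1 3"
    using odd_tornheim_recurrence[of 2 1 2] by (simp add: numeral_eq_Suc)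
  moreover have "odd_tornheim 3 1 3 = odd_tornheim 2 1 4 + odd_tornheim 3 0 4"
    using odd_tornheim_recurrence[of 2 0 3] by (simp add: numeral_eq_Suc)
  moreover have "odd_tornheim 2 2 3 = odd_tornheim 1 2 4 + odd_tornheim 2 1 4"
    using odd_tornheim_recurrence[of 1 1 3] by (simp add: numeral_eq_Suc)
  moreover have "odd_tornheim 2 3 2 = odd_tornheim 3 2 2" "odd_tornheim 1 2 4 = odd_tornheim 2 1 4"
    by (rule odd_tornheim_commute)+
  moreover have "odd_tornheim 4 3 0 = odd_zeta 3 * odd_zeta 4"
    by (simp add: odd_tornheim_0 mult.commute)
  ultimately show
    "odd_tornheim 3 0 4 = odd_tornheim 3 3 1 / 2 - 3 / 2 * odd_tornheim 2 2 3"
    "odd_tornheim 4 0 3 = odd_zeta 3 * odd_zeta 4 - 2 * odd_tornheim 3 3 1 + odd_tornheim 2 2 3"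
    by linarith+
qed

theorem mainTheorem20:
  shows "sigma 4 3 = 120 * dlambda 7 - 96 * dlambda 2 * dlambda 5 \<and>
         sigma 3 4 = - 80 * dlambda 7 + 8 * dlambda 3 * dlambda 4 + 176 / 3 * dlambda 2 * dlambda 5"
proof -
  have "sigma 4 3 = 16 * odd_tornheim 3 0 4" "sigma 3 4 = 8 * odd_tornheim 4 0 3"
    by (simp_all add: sigma_eq_odd_tornheim)
  then show ?thesis
    unfolding dlambda_numeral odd_tornheim_weight_7_reduction odd_tornheim_3_3_1 odd_tornheim_2_2_3
    by (simp add: field_simps)
qed

end
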